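(* Let $\kappa\neq 2$ and $\rho\in\mathcal X_\kappa$. Suppose $\lambda\in\mathcal E(\rho)$ and $\lambda\notin\mathscr C$. Then there exists a sequence of distinct elements $Z_n\in\mathscr C$ such that $Z_n\to\lambda$ and $|\mathrm{tr}\,\rho(Z_n)|\le 2$ for all $n$.
   Context: $T$ is the one-holed torus; $\pi=\pi_1(T)$ is free on generators $X,Y$. A character is an element $\rho$ of $\mathrm{Hom}(\pi,\mathrm{SL}(2,\mathbb{C}))/\!/\mathrm{SL}(2,\mathbb{C})$, and $\mathcal X_\kappa$ is the set of characters with $\mathrm{tr}\,\rho(XYX^{-1}Y^{-1})=\kappa$. $\mathscr{C}$ is the set of free homotopy classes of essential (non-trivial, non-boundary-parallel) simple closed curves on $T$; $\mathrm{tr}\,\rho(W)$ is well defined for $W\in\mathscr C$. $\mathscr{PL}$ is the projective lamination space of $T$, identified with $\hat{\mathbb R}$ so that $\mathscr{C}$ corresponds to $\hat{\mathbb Q}$. $\Lambda\in\mathscr{PL}$ is an end invariant of $\rho$ if there exist $K>0$ and distinct $X_n\in\mathscr{C}$ with $X_n\to\Lambda$ and $|\mathrm{tr}\,\rho(X_n)|<K$; $\mathcal{E}(\rho)$ is the set of end invariants. *)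

theory Defs
  imports "HOL-Analysis.Analysis"
begin

text \<open>A representation rho of pi = F(X,Y) into SL(2,C) is determined by the pair
  (A,B) = (rho X, rho Y) with det A = det B = 1.\<close>

definition SL2 :: "complex^2^2 \<Rightarrow> bool" where
  "SL2 M \<longleftrightarrow> det M = 1"

definition sl2_inv :: "complex^2^2 \<Rightarrow> complex^2^2" where
  "sl2_inv M = vector [vector [M$2$2, - M$1$2], vector [- M$2$1, M$1$1]]"

datatype letter = LX | LXi | LY | LYi

fun eval_letter :: "complex^2^2 \<Rightarrow> complex^2^2 \<Rightarrow> letter \<Rightarrow> complex^2^2" where
  "eval_letter A B LX = A"
| "eval_letter A B LXi = sl2_inv A"
| "eval_letter A B LY = B"
| "eval_letter A B LYi = sl2_inv B"

definition eval_word :: "complex^2^2 \<Rightarrow> complex^2^2 \<Rightarrow> letter list \<Rightarrow> complex^2^2" where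
  "eval_word A B w = foldr (\<lambda>l M. eval_letter A B l ** M) w (mat 1)"

definition in_X_kappa :: "complex \<Rightarrow> complex^2^2 \<Rightarrow> complex^2^2 \<Rightarrow> bool" where
  "in_X_kappa \<kappa> A B \<longleftrightarrow> SL2 A \<and> SL2 B \<and>
     trace (eval_word A B [LX, LY, LXi, LYi]) = \<kappa>"

text \<open>An essential simple closed curve is determined (up to free homotopy and orientation)
  by its homology class \<open>\<plusminus>(a,b)\<close> with a, b coprime; we normalise to a > 0, or (a,b) = (0,1).\<close>
definition curves :: "(int \<times> int) set" where
  "curves = {(a, b). coprime a b \<and> (a > 0 \<or> (a = 0 \<and> b = 1))}"

text \<open>A representative word: the Christoffel word with a letters X and |b| letters Y
  (resp. Y^-1 if b < 0).\<close>
definition curve_word :: "int \<times> int \<Rightarrow> letter list" where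
  "curve_word c = (case c of (a, b) \<Rightarrow>
     (if a = 0 then [LY] else
      let n = nat (a + \<bar>b\<bar>); y = (if b \<ge> 0 then LY else LYi) in
      map (\<lambda>i. if \<lfloor>real i * real_of_int \<bar>b\<bar> / real n\<rfloor>
                    > \<lfloor>(real i - 1) * real_of_int \<bar>b\<bar> / real n\<rfloor> then y else LX)
          [1..<n+1]))"

definition tr_curve :: "complex^2^2 \<Rightarrow> complex^2^2 \<Rightarrow> int \<times> int \<Rightarrow> complex" where
  "tr_curve A B c = trace (eval_word A B (curve_word c))"

text \<open>PL is identified with the extended real line R-hat = R \<union> {\<infinity>}; we model it as
  \<open>real option\<close> (None = \<infinity>), with the topology of the circle via inverse stereographic
  projection.\<close>
type_synonym PL = "real option"

definition pl_emb :: "PL \<Rightarrow> real \<times> real" where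
  "pl_emb p = (case p of None \<Rightarrow> (0, 1)
      | Some t \<Rightarrow> (2 * t / (1 + t\<^sup>2), (t\<^sup>2 - 1) / (1 + t\<^sup>2)))"

definition pl_tendsto :: "(nat \<Rightarrow> PL) \<Rightarrow> PL \<Rightarrow> bool" where
  "pl_tendsto s l \<longleftrightarrow> (\<lambda>n. pl_emb (s n)) \<longlonglongrightarrow> pl_emb l"

definition slope :: "int \<times> int \<Rightarrow> PL" where
  "slope c = (case c of (a, b) \<Rightarrow> if a = 0 then None else Some (real_of_int b / real_of_int a))"

definition end_invariant :: "complex^2^2 \<Rightarrow> complex^2^2 \<Rightarrow> PL \<Rightarrow> bool" where
  "end_invariant A B \<Lambda> \<longleftrightarrow>
     (\<exists>K>0. \<exists>Xs :: nat \<Rightarrow> int \<times> int. inj Xs \<and> (\<forall>n. Xs n \<in> curves) \<and>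
        pl_tendsto (\<lambda>n. slope (Xs n)) \<Lambda> \<and> (\<forall>n. cmod (tr_curve A B (Xs n)) < K))"

end

theory Submission
  imports Defs
begin

text \<open>
  For a curve of slope b/a \<ge> 0 let f(a,b) be the trace of its Christoffel word. Along the Farey
  tree f is a Markoff map: f(u+v) + f(|u-v|) = f(u) f(v) on every edge, and the Fricke polynomial
  x^2 + y^2 + z^2 - xyz takes the value \<kappa> + 2 on every triangle; negative slopes reduce to
  this by replacing B with B\<inverse>. Suppose every curve of slope close to the irrational \<lambda> had
  trace of modulus > 2, and follow the Farey intervals (u,v) shrinking to \<lambda>. If on one of
  them |f(u+v)| \<ge> |f(|u-v|)|, then inside that interval f grows exponentially in the size of
  the vector, so only finitely many curves near \<lambda> have bounded trace, contradicting that \<lambda>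
  is an end invariant. Otherwise |f(u+v)| < |f(|u-v|)| all along the path; then |f(u)| |f(v)|
  decreases to a limit, which forces f(u+v) - f(|u-v|) \<rightarrow> 0 and
  (f(u)^2 - 4)(f(v)^2 - 4) \<rightarrow> 0, hence \<kappa> + 2 = 4.
\<close>

section \<open>Trace identities in SL(2,C)\<close>

lemma matrix_mult_2x2_nth:
  fixes M N :: "complex^2^2"
  shows "(M ** N)$1$1 = M$1$1 * N$1$1 + M$1$2 * N$2$1"
    and "(M ** N)$1$2 = M$1$1 * N$1$2 + M$1$2 * N$2$2"
    and "(M ** N)$2$1 = M$2$1 * N$1$1 + M$2$2 * N$2$1"
    and "(M ** N)$2$2 = M$2$1 * N$1$2 + M$2$2 * N$2$2"
  by (simp_all add: matrix_matrix_mult_def sum_2)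

lemma trace_2x2: "trace (M::complex^2^2) = M$1$1 + M$2$2"
  by (simp add: trace_def sum_2)

lemma sl2_inv_nth:
  "sl2_inv M $1$1 = M$2$2" "sl2_inv M $1$2 = - M$1$2"
  "sl2_inv M $2$1 = - M$2$1" "sl2_inv M $2$2 = M$1$1"
  by (simp_all add: sl2_inv_def)

lemma mat_1_2x2_nth:
  "(mat 1 :: complex^2^2)$1$1 = 1" "(mat 1 :: complex^2^2)$1$2 = 0"
  "(mat 1 :: complex^2^2)$2$1 = 0" "(mat 1 :: complex^2^2)$2$2 = 1"
  by (simp_all add: mat_def)

lemmas mat2_simps = matrix_mult_2x2_nth trace_2x2 sl2_inv_nth mat_1_2x2_nth det_2

lemma det_sl2_inv [simp]: "det (sl2_inv M) = det (M::complex^2^2)"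
  by (simp add: mat2_simps algebra_simps)

lemma trace_sl2_inv [simp]: "trace (sl2_inv M) = trace (M::complex^2^2)"
  by (simp add: mat2_simps)

lemma sl2_inv_sl2_inv [simp]: "sl2_inv (sl2_inv M) = (M::complex^2^2)"
  by (simp add: vec_eq_iff forall_2 sl2_inv_nth)

lemma trace_mult_sl2_inv: "trace (M ** sl2_inv N) = trace M * trace N - trace (M ** (N::complex^2^2))"
  by (simp add: mat2_simps algebra_simps)

lemma trace_square_mult:
  "det (M::complex^2^2) = 1 \<Longrightarrow> trace (M ** M ** N) + trace N = trace M * trace (M ** N)"
  by (simp add: mat2_simps) algebra

lemma trace_mult_square:
  "det (M::complex^2^2) = 1 \<Longrightarrow> trace (N ** M ** M) + trace N = trace (N ** M) * trace M"
  by (simp add: mat2_simps) algebra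

definition fricke :: "complex \<Rightarrow> complex \<Rightarrow> complex \<Rightarrow> complex" where
  "fricke x y z = x\<^sup>2 + y\<^sup>2 + z\<^sup>2 - x * y * z"

lemma fricke_trace_commutator:
  fixes M N :: "complex^2^2"
  assumes "det M = 1" "det N = 1"
  shows "fricke (trace M) (trace N) (trace (M ** N)) = trace (M ** N ** sl2_inv M ** sl2_inv N) + 2"
  using assms unfolding fricke_def by (simp add: mat2_simps) algebra

lemma eval_word_append: "eval_word A B (u @ v) = eval_word A B u ** eval_word A B v"
  by (induction u) (simp_all add: eval_word_def matrix_mul_assoc matrix_mul_lid)

lemma det_eval_word:
  assumes "det A = 1" "det B = 1"
  shows "det (eval_word A B w) = 1"
proof (induction w)
  case Nil
  then show ?case by (simp add: eval_word_def det_I)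
next
  case (Cons l w)
  have "det (eval_letter A B l) = 1" using assms by (cases l) auto
  with Cons show ?case by (simp add: eval_word_def det_mul)
qed

lemma eval_word_commutator:
  "eval_word A B [LX, LY, LXi, LYi] = A ** B ** sl2_inv A ** sl2_inv B"
  by (simp add: eval_word_def matrix_mul_assoc matrix_mul_rid)

lemma in_X_kappa_iff:
  "in_X_kappa \<kappa> A B \<longleftrightarrow> det A = 1 \<and> det B = 1 \<and> trace (A ** B ** sl2_inv A ** sl2_inv B) = \<kappa>"
  by (simp add: in_X_kappa_def SL2_def eval_word_commutator)

text \<open>Replacing B by its inverse keeps the commutator trace, since the Fricke polynomial is
  invariant under z \<mapsto> xy - z.\<close>
lemma in_X_kappa_sl2_inv:
  assumes "in_X_kappa \<kappa> A B"
  shows "in_X_kappa \<kappa> A (sl2_inv B)"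
proof -
  have dA: "det A = 1" and dB: "det B = 1" and \<kappa>: "trace (A ** B ** sl2_inv A ** sl2_inv B) = \<kappa>"
    using assms by (auto simp: in_X_kappa_iff)
  have "fricke (trace A) (trace B) (trace A * trace B - trace (A ** B)) =
        fricke (trace A) (trace B) (trace (A ** B))"
    by (simp add: fricke_def algebra_simps power2_eq_square)
  then have "trace (A ** sl2_inv B ** sl2_inv A ** B) = \<kappa>"
    using fricke_trace_commutator[OF dA dB] fricke_trace_commutator[of A "sl2_inv B"] dA dB \<kappa>
    by (simp add: trace_mult_sl2_inv)
  then show ?thesis using dA dB by (simp add: in_X_kappa_iff)
qed

section \<open>Farey pairs and Christoffel words\<close>

lemma div_eq_div_of_scaled_eq:
  fixes x y e n N :: int
  assumes "0 < n" "n * x = N * y + e" "0 \<le> e" "e < N"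
  shows "x div N = y div n"
proof -
  define q r where "q = y div n" and "r = y mod n"
  have y: "y = n * q + r" and r: "0 \<le> r" "r < n"
    using assms(1) unfolding q_def r_def by simp_all
  have nx: "n * (x - N * q) = N * r + e" using assms(2) y by (simp add: algebra_simps)
  have "N * r \<le> N * (n - 1)" using r assms(3,4) by (intro mult_left_mono) auto
  then have "n * (x - N * q) < n * N" using nx assms(4) by (simp add: algebra_simps)
  moreover have "0 \<le> n * (x - N * q)" using nx r assms(3,4) by simp
  ultimately have "0 \<le> x - N * q" "x - N * q < N"
    using assms(1) by (simp_all add: zero_le_mult_iff mult_less_cancel_left_pos)
  then show ?thesis unfolding q_def[symmetric] by (intro int_div_pos_eq[of _ _ _ "x - N * q"]) auto
qed

definition cross :: "int \<times> int \<Rightarrow> int \<times> int \<Rightarrow> int" where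
  "cross u v = fst u * snd v - fst v * snd u"

definition farey_pair :: "int \<times> int \<Rightarrow> int \<times> int \<Rightarrow> bool" where
  "farey_pair u v \<longleftrightarrow> 0 \<le> fst u \<and> 0 \<le> snd u \<and> 0 \<le> fst v \<and> 0 \<le> snd v \<and> cross u v = 1"

definition farey_diff :: "int \<times> int \<Rightarrow> int \<times> int \<Rightarrow> int \<times> int" where
  "farey_diff u v = (\<bar>fst u - fst v\<bar>, \<bar>snd u - snd v\<bar>)"

definition farey_size :: "int \<times> int \<Rightarrow> int" where
  "farey_size c = fst c + snd c"

lemma cross_add [simp]: "cross u (u + w) = cross u w" "cross (w + v) v = cross w v"
  by (simp_all add: cross_def algebra_simps)

lemma farey_pair_add_left: "farey_pair u v \<Longrightarrow> farey_pair u (u + v)"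
  and farey_pair_add_right: "farey_pair u v \<Longrightarrow> farey_pair (u + v) v"
  by (simp_all add: farey_pair_def)

lemma farey_size_add [simp]: "farey_size (u + v) = farey_size u + farey_size v"
  by (simp add: farey_size_def)

lemma farey_size_pos:
  assumes "farey_pair u v"
  shows "1 \<le> farey_size u" "1 \<le> farey_size v"
proof -
  have h: "fst u * snd v - fst v * snd u = 1" "0 \<le> fst u" "0 \<le> snd u" "0 \<le> fst v" "0 \<le> snd v"
    using assms unfolding farey_pair_def cross_def by auto
  show "1 \<le> farey_size u"
  proof (rule ccontr)
    assume "\<not> ?thesis"
    then have "fst u = 0" "snd u = 0" using h unfolding farey_size_def by auto
    then show False using h by simp
  qed
  show "1 \<le> farey_size v"
  proof (rule ccontr)
    assume "\<not> ?thesis"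
    then have "fst v = 0" "snd v = 0" using h unfolding farey_size_def by auto
    then show False using h by simp
  qed
qed

lemma farey_diff_add_left: "0 \<le> fst w \<Longrightarrow> 0 \<le> snd w \<Longrightarrow> farey_diff u (u + w) = w"
  and farey_diff_add_right: "0 \<le> fst w \<Longrightarrow> 0 \<le> snd w \<Longrightarrow> farey_diff (w + v) v = w"
  by (simp_all add: farey_diff_def prod_eq_iff)

lemma cross_eq_1_coprime:
  assumes "cross u v = 1"
  shows "coprime (fst u) (snd u)" "coprime (fst v) (snd v)"
proof -
  have e: "fst u * snd v - fst v * snd u = 1" using assms unfolding cross_def .
  show "coprime (fst u) (snd u)"
  proof (rule coprimeI)
    fix d assume "d dvd fst u" "d dvd snd u"
    then have "d dvd fst u * snd v - fst v * snd u" by simp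
    then show "is_unit d" using e by simp
  qed
  show "coprime (fst v) (snd v)"
  proof (rule coprimeI)
    fix d assume "d dvd fst v" "d dvd snd v"
    then have "d dvd fst u * snd v - fst v * snd u" by simp
    then show "is_unit d" using e by simp
  qed
qed

lemma farey_pair_cases:
  assumes "farey_pair u v"
  obtains w where "farey_pair u w" "v = u + w"
    | w where "farey_pair w v" "u = w + v"
    | "u = (1, 0)" "v = (0, 1)"
proof -
  obtain a1 b1 a2 b2 where u: "u = (a1, b1)" and v: "v = (a2, b2)" by force
  have h: "0 \<le> a1" "0 \<le> b1" "0 \<le> a2" "0 \<le> b2" "a1 * b2 - a2 * b1 = 1"
    using assms unfolding u v farey_pair_def cross_def by auto
  consider "a1 \<le> a2" "b1 \<le> b2" | "a2 \<le> a1" "b2 \<le> b1" | "a2 < a1" "b1 < b2" | "a1 < a2" "b2 < b1"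
    by linarith
  then show ?thesis
  proof cases
    case 1
    show ?thesis
      by (rule that(1)[of "(a2 - a1, b2 - b1)"]) (use 1 h in \<open>auto simp: u v farey_pair_def cross_def algebra_simps\<close>)
  next
    case 2
    show ?thesis
      by (rule that(2)[of "(a1 - a2, b1 - b2)"]) (use 2 h in \<open>auto simp: u v farey_pair_def cross_def algebra_simps\<close>)
  next
    case 3
    have "(a2 + 1) * (b1 + 1) \<le> a1 * b2" using 3 h by (intro mult_mono) auto
    then have "a2 + b1 + 1 \<le> 1" using h by (simp add: algebra_simps)
    then have "a2 = 0" "b1 = 0" using h by auto
    then have "a1 * b2 = 1" using h by simp
    then have "a1 = 1" "b2 = 1" using h by (auto simp: zmult_eq_1_iff)
    then show ?thesis using that(3) \<open>a2 = 0\<close> \<open>b1 = 0\<close> u v by simp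
  next
    case 4
    have "a1 * b2 \<le> a2 * b1" using 4 h by (intro mult_mono) auto
    then show ?thesis using h by simp
  qed
qed

lemma cross_decompose:
  assumes "cross u v = 1"
  shows "fst w = cross w v * fst u + cross u w * fst v" "snd w = cross w v * snd u + cross u w * snd v"
proof -
  have "fst w = fst w * cross u v" "snd w = snd w * cross u v" using assms by simp_all
  then show "fst w = cross w v * fst u + cross u w * fst v" "snd w = cross w v * snd u + cross u w * snd v"
    unfolding cross_def by (simp_all add: algebra_simps)
qed

lemma farey_cone_nonneg:
  assumes uv: "farey_pair u v" and w: "0 < cross u w" "0 < cross w v"
  shows "0 \<le> fst w" "0 \<le> snd w"
proof -
  have dec: "fst w = cross w v * fst u + cross u w * fst v" "snd w = cross w v * snd u + cross u w * snd v"
    using cross_decompose[of u v w] uv unfolding farey_pair_def by simp_all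
  have "0 \<le> cross w v * fst u" "0 \<le> cross u w * fst v" "0 \<le> cross w v * snd u" "0 \<le> cross u w * snd v"
    using uv w unfolding farey_pair_def by simp_all
  then show "0 \<le> fst w" "0 \<le> snd w" using dec by linarith+
qed

lemma farey_cone_cases:
  assumes uv: "farey_pair u v" and w: "coprime (fst w) (snd w)" "0 < cross u w" "0 < cross w v"
  shows "farey_size u + farey_size v \<le> farey_size w"
    "w = u + v \<or> 0 < cross w (u + v) \<or> 0 < cross (u + v) w"
proof -
  define \<alpha> \<beta> where "\<alpha> = cross w v" and "\<beta> = cross u w"
  have dec: "fst w = \<alpha> * fst u + \<beta> * fst v" "snd w = \<alpha> * snd u + \<beta> * snd v"
    using cross_decompose[of u v w] uv unfolding \<alpha>_def \<beta>_def farey_pair_def by simp_all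
  have "farey_size w = \<alpha> * farey_size u + \<beta> * farey_size v"
    using dec by (simp add: farey_size_def algebra_simps)
  moreover have "farey_size u \<le> \<alpha> * farey_size u" "farey_size v \<le> \<beta> * farey_size v"
    using w uv farey_size_pos[OF uv] unfolding \<alpha>_def \<beta>_def by simp_all
  ultimately show "farey_size u + farey_size v \<le> farey_size w" by simp
  show "w = u + v \<or> 0 < cross w (u + v) \<or> 0 < cross (u + v) w"
  proof (cases "\<alpha> = \<beta>")
    case True
    then have "\<alpha> dvd fst w" "\<alpha> dvd snd w" using dec by simp_all
    then have "\<alpha> = 1" using w(1,3) coprime_common_divisor[of "fst w" "snd w" \<alpha>] unfolding \<alpha>_def by auto
    then show ?thesis using dec True by (simp add: prod_eq_iff)
  next
    case False
    have "cross w (u + v) = \<alpha> - \<beta>" "cross (u + v) w = \<beta> - \<alpha>"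
      unfolding \<alpha>_def \<beta>_def cross_def by (simp_all add: algebra_simps)
    then show ?thesis using False by auto
  qed
qed

definition christoffel_letter :: "int \<Rightarrow> int \<Rightarrow> nat \<Rightarrow> letter" where
  "christoffel_letter a b i =
     (if ((int i - 1) * b) div (a + b) < (int i * b) div (a + b) then LY else LX)"

definition christoffel_word :: "int \<times> int \<Rightarrow> letter list" where
  "christoffel_word c = map (christoffel_letter (fst c) (snd c)) [1..<nat (farey_size c) + 1]"

lemma christoffel_word_1_0 [simp]: "christoffel_word (1, 0) = [LX]"
  and christoffel_word_0_1 [simp]: "christoffel_word (0, 1) = [LY]"
  by (simp_all add: christoffel_word_def christoffel_letter_def farey_size_def)

lemma farey_div_add_left:
  fixes a1 b1 a2 b2 i :: int
  assumes "farey_pair (a1, b1) (a2, b2)" "0 \<le> i" "i \<le> a1 + b1"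
  shows "(i * (b1 + b2)) div ((a1 + a2) + (b1 + b2)) = (i * b1) div (a1 + b1)"
proof (rule div_eq_div_of_scaled_eq)
  have h: "a1 * b2 - a2 * b1 = 1" using assms(1) by (simp add: farey_pair_def cross_def)
  show "0 < a1 + b1" "i < a1 + a2 + (b1 + b2)"
    using farey_size_pos[OF assms(1)] assms(3) by (simp_all add: farey_size_def)
  show "(a1 + b1) * (i * (b1 + b2)) = (a1 + a2 + (b1 + b2)) * (i * b1) + i"
  proof -
    have "(a1 + b1) * (i * (b1 + b2)) - (a1 + a2 + (b1 + b2)) * (i * b1) = i * (a1 * b2 - a2 * b1)"
      by (simp add: algebra_simps)
    then show ?thesis using h by simp
  qed
qed (use assms in simp)

lemma farey_div_add_right:
  fixes a1 b1 a2 b2 j :: int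
  assumes "farey_pair (a1, b1) (a2, b2)" "0 \<le> j" "j \<le> a2 + b2"
  shows "((a1 + b1 + j) * (b1 + b2)) div ((a1 + a2) + (b1 + b2)) = b1 + (j * b2) div (a2 + b2)"
proof -
  have h: "a1 * b2 - a2 * b1 = 1" using assms(1) by (simp add: farey_pair_def cross_def)
  have pos: "0 < a1 + b1" "0 < a2 + b2"
    using farey_size_pos[OF assms(1)] by (simp_all add: farey_size_def)
  have "((a1 + b1 + j) * (b1 + b2)) div ((a1 + a2) + (b1 + b2)) = ((a2 + b2) * b1 + j * b2) div (a2 + b2)"
  proof (rule div_eq_div_of_scaled_eq)
    show "(a2 + b2) * ((a1 + b1 + j) * (b1 + b2)) =
          (a1 + a2 + (b1 + b2)) * ((a2 + b2) * b1 + j * b2) + (a2 + b2 - j)"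
    proof -
      have "(a2 + b2) * ((a1 + b1 + j) * (b1 + b2)) - (a1 + a2 + (b1 + b2)) * ((a2 + b2) * b1 + j * b2)
          = (a2 + b2 - j) * (a1 * b2 - a2 * b1)"
        by (simp add: algebra_simps)
      then show ?thesis using h by simp
    qed
  qed (use assms pos in auto)
  also have "\<dots> = b1 + (j * b2) div (a2 + b2)" using pos by simp
  finally show ?thesis .
qed

lemma christoffel_letter_add_left:
  assumes "farey_pair (a1, b1) (a2, b2)" "1 \<le> k" "int k \<le> a1 + b1"
  shows "christoffel_letter (a1 + a2) (b1 + b2) k = christoffel_letter a1 b1 k"
  using farey_div_add_left[OF assms(1), of "int k"] farey_div_add_left[OF assms(1), of "int k - 1"] assms
  by (simp add: christoffel_letter_def)

lemma christoffel_letter_add_right: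
  assumes "farey_pair (a1, b1) (a2, b2)" "1 \<le> j" "int j \<le> a2 + b2"
  shows "christoffel_letter (a1 + a2) (b1 + b2) (nat (a1 + b1) + j) = christoffel_letter a2 b2 j"
proof -
  have n1: "0 < a1 + b1" using farey_size_pos(1)[OF assms(1)] by (simp add: farey_size_def)
  have "int (nat (a1 + b1) + j) = a1 + b1 + int j" "int (nat (a1 + b1) + j) - 1 = a1 + b1 + (int j - 1)"
    using n1 by simp_all
  then show ?thesis
    using farey_div_add_right[OF assms(1), of "int j"] farey_div_add_right[OF assms(1), of "int j - 1"] assms
    by (simp add: christoffel_letter_def add_diff_eq)
qed

lemma christoffel_word_add:
  assumes "farey_pair u v"
  shows "christoffel_word (u + v) = christoffel_word u @ christoffel_word v"
proof -
  obtain a1 b1 a2 b2 where u: "u = (a1, b1)" and v: "v = (a2, b2)" by force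
  have uv: "farey_pair (a1, b1) (a2, b2)" using assms u v by simp
  define N1 N2 where "N1 = nat (a1 + b1)" and "N2 = nat (a2 + b2)"
  have p: "1 \<le> a1 + b1" "1 \<le> a2 + b2" using farey_size_pos[OF assms] u v by (simp_all add: farey_size_def)
  have N: "nat (farey_size (u + v)) = N1 + N2" using p by (simp add: N1_def N2_def u v farey_size_def)
  show ?thesis
  proof (rule nth_equalityI)
    show "length (christoffel_word (u + v)) = length (christoffel_word u @ christoffel_word v)"
      using N by (simp add: christoffel_word_def N1_def N2_def u v farey_size_def del: upt_Suc)
  next
    fix i assume "i < length (christoffel_word (u + v))"
    then have i: "i < N1 + N2" using N by (simp add: christoffel_word_def del: upt_Suc)
    have L: "christoffel_word (u + v) ! i = christoffel_letter (a1 + a2) (b1 + b2) (Suc i)"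
      using N i by (simp add: christoffel_word_def u v del: upt_Suc)
    show "christoffel_word (u + v) ! i = (christoffel_word u @ christoffel_word v) ! i"
    proof (cases "i < N1")
      case True
      then have "(christoffel_word u @ christoffel_word v) ! i = christoffel_letter a1 b1 (Suc i)"
        by (simp add: christoffel_word_def u N1_def farey_size_def nth_append del: upt_Suc)
      then show ?thesis using L christoffel_letter_add_left[OF uv, of "Suc i"] True N1_def p by simp
    next
      case False
      then have "(christoffel_word u @ christoffel_word v) ! i = christoffel_letter a2 b2 (Suc (i - N1))"
        using i by (simp add: christoffel_word_def u v N1_def N2_def farey_size_def nth_append del: upt_Suc)
      moreover have "Suc i = N1 + Suc (i - N1)" using False by simp
      ultimately show ?thesis
        using L christoffel_letter_add_right[OF uv, of "Suc (i - N1)"] i N1_def N2_def p by simp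
    qed
  qed
qed

lemma curve_word_nonneg:
  assumes "0 < a" "0 \<le> b"
  shows "curve_word (a, b) = christoffel_word (a, b)"
proof -
  have "\<lfloor>real i * real_of_int b / real (nat (a + b))\<rfloor> = int i * b div (a + b)"
    "\<lfloor>(real i - 1) * real_of_int b / real (nat (a + b))\<rfloor> = (int i - 1) * b div (a + b)" for i :: nat
    using assms floor_divide_of_int_eq[of "int i * b" "a + b"] floor_divide_of_int_eq[of "(int i - 1) * b" "a + b"]
    by simp_all
  then show ?thesis
    using assms by (simp add: curve_word_def christoffel_word_def christoffel_letter_def farey_size_def Let_def)
qed

lemma eval_curve_word_neg:
  assumes "0 < a" "b < 0"
  shows "eval_word A B (curve_word (a, b)) = eval_word A (sl2_inv B) (christoffel_word (a, - b))"
proof -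
  define P where "P i \<longleftrightarrow> ((int i - 1) * (- b)) div (a + (- b)) < (int i * (- b)) div (a + (- b))"
    for i :: nat
  have "\<lfloor>real i * real_of_int (- b) / real (nat (a + - b))\<rfloor> = int i * (- b) div (a + - b)"
    "\<lfloor>(real i - 1) * real_of_int (- b) / real (nat (a + - b))\<rfloor> = (int i - 1) * (- b) div (a + - b)"
    for i :: nat
    using assms floor_divide_of_int_eq[of "int i * (- b)" "a + - b"]
      floor_divide_of_int_eq[of "(int i - 1) * (- b)" "a + - b"]
    by simp_all
  then have "curve_word (a, b) = map (\<lambda>i. if P i then LYi else LX) [1..<nat (a + - b) + 1]"
    using assms by (simp add: curve_word_def P_def Let_def)
  moreover have "christoffel_word (a, - b) = map (\<lambda>i. if P i then LY else LX) [1..<nat (a + - b) + 1]"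
    by (simp add: christoffel_word_def christoffel_letter_def farey_size_def P_def)
  moreover have "eval_word A B (map (\<lambda>i. if P i then LYi else LX) xs) =
      eval_word A (sl2_inv B) (map (\<lambda>i. if P i then LY else LX) xs)" for xs
    by (induction xs) (simp_all add: eval_word_def)
  ultimately show ?thesis by simp
qed

section \<open>Traces along the Farey tree\<close>

definition farey_trace :: "complex^2^2 \<Rightarrow> complex^2^2 \<Rightarrow> int \<times> int \<Rightarrow> complex" where
  "farey_trace A B c = trace (eval_word A B (christoffel_word c))"

lemma farey_trace_recurrence:
  assumes "det A = 1" "det B = 1" "farey_pair u w"
  shows "farey_trace A B (u + (u + w)) + farey_trace A B w = farey_trace A B u * farey_trace A B (u + w)"
    and "farey_trace A B ((u + w) + w) + farey_trace A B u = farey_trace A B (u + w) * farey_trace A B w"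
proof -
  let ?M = "\<lambda>c. eval_word A B (christoffel_word c)"
  have split: "?M (u + (u + w)) = ?M u ** ?M u ** ?M w" "?M ((u + w) + w) = ?M u ** ?M w ** ?M w"
    using assms(3) farey_pair_add_left farey_pair_add_right
    by (simp_all add: christoffel_word_add eval_word_append matrix_mul_assoc)
  have "det (?M c) = 1" for c using det_eval_word assms(1,2) .
  then show "farey_trace A B (u + (u + w)) + farey_trace A B w = farey_trace A B u * farey_trace A B (u + w)"
    and "farey_trace A B ((u + w) + w) + farey_trace A B u = farey_trace A B (u + w) * farey_trace A B w"
    using assms(3) trace_square_mult trace_mult_square
    by (simp_all add: farey_trace_def split christoffel_word_add eval_word_append)
qed

definition edge_relation :: "(int \<times> int \<Rightarrow> complex) \<Rightarrow> bool" where
  "edge_relation f \<longleftrightarrow> (\<forall>u v. farey_pair u v \<longrightarrow> 1 \<le> fst u \<longrightarrow> 1 \<le> fst v \<longrightarrow>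
      f (u + v) + f (farey_diff u v) = f u * f v)"

lemma edge_relationD:
  "edge_relation f \<Longrightarrow> farey_pair u v \<Longrightarrow> 1 \<le> fst u \<Longrightarrow> 1 \<le> fst v \<Longrightarrow>
   f (u + v) + f (farey_diff u v) = f u * f v"
  unfolding edge_relation_def by blast

lemma edge_relation_farey_trace:
  assumes "det A = 1" "det B = 1"
  shows "edge_relation (farey_trace A B)"
  unfolding edge_relation_def
proof (intro allI impI)
  fix u v assume uv: "farey_pair u v" and "1 \<le> fst u" "1 \<le> fst v"
  then show "farey_trace A B (u + v) + farey_trace A B (farey_diff u v) = farey_trace A B u * farey_trace A B v"
  proof (cases rule: farey_pair_cases)
    case (1 w)
    then show ?thesis
      using farey_trace_recurrence(1)[OF assms 1(1)] farey_diff_add_left[of w u] 1(1)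
      by (simp add: farey_pair_def)
  next
    case (2 w)
    then show ?thesis
      using farey_trace_recurrence(2)[OF assms 2(1)] farey_diff_add_right[of w v] 2(1)
      by (simp add: farey_pair_def)
  qed simp
qed

lemma fricke_farey_trace:
  assumes "det A = 1" "det B = 1"
  shows "farey_pair u v \<Longrightarrow> fricke (farey_trace A B u) (farey_trace A B v) (farey_trace A B (u + v)) =
    trace (A ** B ** sl2_inv A ** sl2_inv B) + 2"
proof (induction "nat (farey_size u + farey_size v)" arbitrary: u v rule: less_induct)
  case less
  have pos: "1 \<le> farey_size u" "1 \<le> farey_size v" using farey_size_pos[OF less.prems] .
  have fricke_swap: "fricke x y (x * y - z) = fricke x z y" "fricke x y (x * y - z) = fricke z y x" for x y z
    by (simp_all add: fricke_def algebra_simps power2_eq_square)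
  from less.prems show ?case
  proof (cases rule: farey_pair_cases)
    case (1 w)
    then have "fricke (farey_trace A B u) (farey_trace A B w) (farey_trace A B v) =
        trace (A ** B ** sl2_inv A ** sl2_inv B) + 2"
      using less.hyps[of u w] pos farey_size_pos(2)[of u w] by simp
    moreover have "farey_trace A B (u + v) = farey_trace A B u * farey_trace A B v - farey_trace A B w"
      using farey_trace_recurrence(1)[OF assms 1(1)] 1(2) by (simp add: algebra_simps)
    ultimately show ?thesis using fricke_swap(1) by metis
  next
    case (2 w)
    then have "fricke (farey_trace A B w) (farey_trace A B v) (farey_trace A B u) =
        trace (A ** B ** sl2_inv A ** sl2_inv B) + 2"
      using less.hyps[of w v] pos farey_size_pos(1)[of w v] by simp
    moreover have "farey_trace A B (u + v) = farey_trace A B u * farey_trace A B v - farey_trace A B w"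
      using farey_trace_recurrence(2)[OF assms 2(1)] 2(2) by (simp add: algebra_simps)
    ultimately show ?thesis using fricke_swap(2) by metis
  next
    case 3
    then have "christoffel_word (u + v) = [LX, LY]"
      using christoffel_word_add[OF less.prems] by simp
    then show ?thesis
      using 3 fricke_trace_commutator[OF assms]
      by (simp add: farey_trace_def eval_word_def matrix_mul_rid)
  qed
qed

section \<open>Descending paths in the Farey tree\<close>

lemma decseq_ratio_tendsto_2:
  fixes \<Phi> K :: "nat \<Rightarrow> real"
  assumes K: "\<And>k. 2 < K k" and lower: "\<And>k. c \<le> \<Phi> k" "0 < c"
    and ratio: "\<And>k. K k * \<Phi> (Suc k) < 2 * \<Phi> k"
  shows "decseq \<Phi>" "\<exists>L>0. \<Phi> \<longlonglongrightarrow> L" "K \<longlonglongrightarrow> 2"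
proof -
  have pos: "0 < \<Phi> k" for k using lower(1)[of k] lower(2) by linarith
  have "\<Phi> (Suc k) \<le> \<Phi> k" for k
  proof -
    have "2 * \<Phi> (Suc k) \<le> K k * \<Phi> (Suc k)" using K[of k] pos[of "Suc k"] by (intro mult_right_mono) auto
    then show ?thesis using ratio[of k] by linarith
  qed
  then show dec: "decseq \<Phi>" by (simp add: decseq_Suc_iff)
  have "Bseq \<Phi>" using dec lower(1) by (intro decseq_bounded[of \<Phi> c]) auto
  then have "convergent \<Phi>" using dec Bseq_monoseq_convergent monoseq_iff by blast
  then obtain L where L: "\<Phi> \<longlonglongrightarrow> L" by (auto simp: convergent_def)
  have "c \<le> L" using L lower(1) by (intro LIMSEQ_le_const) auto
  then have "0 < L" using lower(2) by linarith
  with L show "\<exists>L>0. \<Phi> \<longlonglongrightarrow> L" by blast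
  have "(\<lambda>k. 2 * \<Phi> k / \<Phi> (Suc k)) \<longlonglongrightarrow> 2 * L / L"
    using \<open>0 < L\<close> by (intro tendsto_intros L LIMSEQ_Suc[OF L]) auto
  then have upper: "(\<lambda>k. 2 * \<Phi> k / \<Phi> (Suc k)) \<longlonglongrightarrow> 2" using \<open>0 < L\<close> by simp
  have "K k \<le> 2 * \<Phi> k / \<Phi> (Suc k)" for k
    using ratio[of k] pos[of "Suc k"] by (simp add: field_simps)
  then have "\<forall>\<^sub>F k in sequentially. 2 \<le> K k" "\<forall>\<^sub>F k in sequentially. K k \<le> 2 * \<Phi> k / \<Phi> (Suc k)"
    using K by (auto intro!: always_eventually less_imp_le)
  then show "K \<longlonglongrightarrow> 2" by (intro tendsto_sandwich[OF _ _ tendsto_const upper])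
qed

text \<open>Traces along a path of edges in the Farey tree: x, y at the endpoints of the k-th edge,
  m at the vertex ahead of it (the sum) and d at the vertex behind it (the difference).\<close>
definition descending_path :: "(nat \<Rightarrow> complex) \<Rightarrow> (nat \<Rightarrow> complex) \<Rightarrow> (nat \<Rightarrow> complex) \<Rightarrow>
    (nat \<Rightarrow> complex) \<Rightarrow> bool" where
  "descending_path x y m d \<longleftrightarrow> (\<forall>k. m k + d k = x k * y k \<and>
     (x (Suc k) = x k \<and> y (Suc k) = m k \<and> d (Suc k) = y k \<or>
      x (Suc k) = m k \<and> y (Suc k) = y k \<and> d (Suc k) = x k) \<and>
     2 < cmod (x k) \<and> 2 < cmod (y k) \<and> cmod (m k) < cmod (d k))"

lemma descending_path_product:
  assumes "descending_path x y m d"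
  defines "\<Phi> \<equiv> \<lambda>k. cmod (x k) * cmod (y k)"
  obtains K where "\<And>k. 2 < K k" "\<And>k. \<Phi> k = K k * cmod (d (Suc k))" "\<And>k. \<Phi> (Suc k) = K k * cmod (m k)"
    "\<And>k. 4 \<le> \<Phi> k" "\<And>k. K k * \<Phi> (Suc k) < 2 * \<Phi> k"
proof
  define K where "K k = (if y (Suc k) = m k \<and> x (Suc k) = x k \<and> d (Suc k) = y k
      then cmod (x k) else cmod (y k))" for k
  have path: "m k + d k = x k * y k" "2 < cmod (x k)" "2 < cmod (y k)" "cmod (m k) < cmod (d k)"
    "x (Suc k) = x k \<and> y (Suc k) = m k \<and> d (Suc k) = y k \<or>
     x (Suc k) = m k \<and> y (Suc k) = y k \<and> d (Suc k) = x k" for k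
    using assms(1) unfolding descending_path_def by blast+
  show K2: "2 < K k" for k using path unfolding K_def by auto
  show \<Phi>d: "\<Phi> k = K k * cmod (d (Suc k))" and \<Phi>m: "\<Phi> (Suc k) = K k * cmod (m k)" for k
    using path(5)[of k] unfolding \<Phi>_def K_def by auto
  show "4 \<le> \<Phi> k" for k
    using path(2,3)[of k] mult_mono[of 2 "cmod (x k)" 2 "cmod (y k)"] unfolding \<Phi>_def by simp
  show "K k * \<Phi> (Suc k) < 2 * \<Phi> k" for k
  proof -
    have "\<Phi> (Suc k) = cmod (m (Suc k) + d (Suc k))"
      using path(1)[of "Suc k"] unfolding \<Phi>_def by (simp add: norm_mult)
    also have "\<dots> < 2 * cmod (d (Suc k))"
      using norm_triangle_ineq[of "m (Suc k)" "d (Suc k)"] path(4)[of "Suc k"] by simp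
    finally show ?thesis using K2[of k] \<Phi>d[of k] by simp
  qed
qed

lemma descending_path_bounded:
  assumes "descending_path x y m d"
  shows "cmod (x k) \<le> cmod (x 0) * cmod (y 0) / 2" "cmod (y k) \<le> cmod (x 0) * cmod (y 0) / 2"
proof -
  obtain K where K: "\<And>k. 2 < K k" "\<And>k. 4 \<le> cmod (x k) * cmod (y k)"
    "\<And>k. K k * (cmod (x (Suc k)) * cmod (y (Suc k))) < 2 * (cmod (x k) * cmod (y k))"
    using descending_path_product[OF assms] by metis
  have "decseq (\<lambda>k. cmod (x k) * cmod (y k))"
    using K by (intro decseq_ratio_tendsto_2(1)[where K=K and c=4]) auto
  then have "cmod (x k) * cmod (y k) \<le> cmod (x 0) * cmod (y 0)" by (simp add: decseq_def)
  moreover have "2 < cmod (x k)" "2 < cmod (y k)" using assms unfolding descending_path_def by blast+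
  ultimately show "cmod (x k) \<le> cmod (x 0) * cmod (y 0) / 2" "cmod (y k) \<le> cmod (x 0) * cmod (y 0) / 2"
    using mult_right_mono[of 2 "cmod (y k)" "cmod (x k)"] mult_left_mono[of 2 "cmod (x k)" "cmod (y k)"]
    by (simp_all add: field_simps)
qed

text \<open>|m| and |d| both tend to half the limit of |m + d| = |x| |y|, so by the parallelogram
  law m - d tends to 0.\<close>
lemma descending_path_diff_tendsto_0:
  assumes "descending_path x y m d"
  shows "(\<lambda>k. m k - d k) \<longlonglongrightarrow> 0"
proof -
  define \<Phi> where "\<Phi> k = cmod (x k) * cmod (y k)" for k
  obtain K where K: "\<And>k. 2 < K k" "\<And>k. \<Phi> k = K k * cmod (d (Suc k))"
    "\<And>k. \<Phi> (Suc k) = K k * cmod (m k)" "\<And>k. 4 \<le> \<Phi> k" "\<And>k. K k * \<Phi> (Suc k) < 2 * \<Phi> k"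
    using descending_path_product[OF assms] unfolding \<Phi>_def by metis
  obtain L where L: "0 < L" "\<Phi> \<longlonglongrightarrow> L" and K2: "K \<longlonglongrightarrow> 2"
    using decseq_ratio_tendsto_2[where K=K and \<Phi>=\<Phi> and c=4] K by auto
  have "(\<lambda>k. \<Phi> k / K k) \<longlonglongrightarrow> L / 2" by (intro tendsto_intros L K2) auto
  moreover have "\<Phi> k / K k = cmod (d (Suc k))" for k using K(1,2)[of k] by simp
  ultimately have "(\<lambda>k. cmod (d (Suc k))) \<longlonglongrightarrow> L / 2" by simp
  then have d: "(\<lambda>k. cmod (d k)) \<longlonglongrightarrow> L / 2" by (rule LIMSEQ_imp_Suc)
  have "(\<lambda>k. \<Phi> (Suc k) / K k) \<longlonglongrightarrow> L / 2" by (intro tendsto_intros LIMSEQ_Suc[OF L(2)] K2) auto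
  moreover have "\<Phi> (Suc k) / K k = cmod (m k)" for k using K(1,3)[of k] by simp
  ultimately have m: "(\<lambda>k. cmod (m k)) \<longlonglongrightarrow> L / 2" by simp
  have "cmod (m k + d k) = \<Phi> k" for k
    using assms unfolding descending_path_def \<Phi>_def by (simp add: norm_mult)
  then have md: "(\<lambda>k. cmod (m k + d k)) \<longlonglongrightarrow> L" using L(2) by simp
  have "(\<lambda>k. 2 * cmod (m k) ^ 2 + 2 * cmod (d k) ^ 2 - cmod (m k + d k) ^ 2) \<longlonglongrightarrow>
        2 * (L / 2)\<^sup>2 + 2 * (L / 2)\<^sup>2 - L\<^sup>2"
    by (intro tendsto_intros m d md)
  moreover have "cmod (a - b) ^ 2 = 2 * cmod a ^ 2 + 2 * cmod b ^ 2 - cmod (a + b) ^ 2" for a b :: complex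
    unfolding cmod_power2 by (simp add: power2_eq_square algebra_simps)
  ultimately have "(\<lambda>k. cmod (m k - d k) ^ 2) \<longlonglongrightarrow> 0" by (simp add: power2_eq_square)
  then have "(\<lambda>k. sqrt (cmod (m k - d k) ^ 2)) \<longlonglongrightarrow> sqrt 0" by (intro tendsto_intros)
  then show ?thesis by (simp add: tendsto_norm_zero_iff)
qed

lemma fricke_sub_4:
  assumes "m + d = x * y"
  shows "fricke x y m - 4 = ((m - d)\<^sup>2 - (x\<^sup>2 - 4) * (y\<^sup>2 - 4)) / 4"
proof -
  have "4 * (fricke x y m - 4) = (m - d)\<^sup>2 - (x\<^sup>2 - 4) * (y\<^sup>2 - 4)"
    using assms unfolding fricke_def by algebra
  then show ?thesis by (simp add: field_simps)
qed

lemma norm_defect_product_le: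
  fixes x y e e' :: complex
  assumes "(x\<^sup>2 - 4) * (y\<^sup>2 - 4) * y = - (x * e - 2 * e') * (y\<^sup>2 - 4)"
    and "2 < cmod y" "cmod x \<le> C" "cmod y \<le> C"
  shows "cmod ((x\<^sup>2 - 4) * (y\<^sup>2 - 4)) \<le> (C * cmod e + 2 * cmod e') * (C\<^sup>2 + 4) / 2"
proof -
  have "cmod (x * e - 2 * e') \<le> C * cmod e + 2 * cmod e'"
    using norm_triangle_ineq4[of "x * e" "2 * e'"] assms(3) mult_right_mono[of "cmod x" C "cmod e"]
    by (simp add: norm_mult)
  moreover have "cmod (y\<^sup>2 - 4) \<le> C\<^sup>2 + 4"
  proof -
    have "cmod y ^ 2 \<le> C ^ 2" using assms(2,4) by (intro power_mono) auto
    then show ?thesis using norm_triangle_ineq4[of "y\<^sup>2" 4] by (simp add: norm_power)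
  qed
  moreover have "cmod ((x\<^sup>2 - 4) * (y\<^sup>2 - 4)) * cmod y = cmod (x * e - 2 * e') * cmod (y\<^sup>2 - 4)"
    using arg_cong[OF assms(1), of cmod] by (simp only: norm_mult norm_minus_cancel)
  ultimately have "cmod ((x\<^sup>2 - 4) * (y\<^sup>2 - 4)) * cmod y \<le> (C * cmod e + 2 * cmod e') * (C\<^sup>2 + 4)"
    by (simp add: mult_mono')
  also have "\<dots> \<le> (C * cmod e + 2 * cmod e') * (C\<^sup>2 + 4) / 2 * cmod y"
  proof -
    have "0 \<le> (C * cmod e + 2 * cmod e') * (C\<^sup>2 + 4)"
      using order_trans[OF norm_ge_zero assms(3)] by (intro mult_nonneg_nonneg add_nonneg_nonneg) auto
    then show ?thesis
      using mult_left_mono[of 2 "cmod y" "(C * cmod e + 2 * cmod e') * (C\<^sup>2 + 4)"] assms(2) by simp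
  qed
  finally show ?thesis by (rule mult_right_le_imp_le) (use assms(2) in auto)
qed

lemma descending_path_fricke_defect_le:
  assumes path: "descending_path x y m d" and fr: "fricke (x k) (y k) (m k) = \<mu>"
    and C: "cmod (x k) \<le> C" "cmod (y k) \<le> C"
  shows "cmod (\<mu> - 4) \<le> cmod (m k - d k) ^ 2 / 4 +
    (C * cmod (m k - d k) + 2 * cmod (m (Suc k) - d (Suc k))) * (C\<^sup>2 + 4) / 8"
proof -
  have rel: "m j + d j = x j * y j" and big: "2 < cmod (x j)" "2 < cmod (y j)" for j
    using path unfolding descending_path_def by blast+
  have step: "x (Suc k) = x k \<and> y (Suc k) = m k \<and> d (Suc k) = y k \<or>
      x (Suc k) = m k \<and> y (Suc k) = y k \<and> d (Suc k) = x k"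
    using path unfolding descending_path_def by blast
  let ?D = "(x k ^ 2 - 4) * (y k ^ 2 - 4)" and ?e = "m k - d k" and ?e' = "m (Suc k) - d (Suc k)"
  \<comment> \<open>The next sum m' = x m - y (or m y - x) links ?D to the two consecutive defects.\<close>
  have "cmod ?D \<le> (C * cmod ?e + 2 * cmod ?e') * (C\<^sup>2 + 4) / 2"
    using step
  proof
    assume s: "x (Suc k) = x k \<and> y (Suc k) = m k \<and> d (Suc k) = y k"
    have "?D * y k = - (x k * ?e - 2 * ?e') * (y k ^ 2 - 4)"
      using rel[of k] rel[of "Suc k"] s by simp algebra
    then show ?thesis by (rule norm_defect_product_le) (use big C in auto)
  next
    assume s: "x (Suc k) = m k \<and> y (Suc k) = y k \<and> d (Suc k) = x k"
    have "(y k ^ 2 - 4) * (x k ^ 2 - 4) * x k = - (y k * ?e - 2 * ?e') * (x k ^ 2 - 4)"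
      using rel[of k] rel[of "Suc k"] s by simp algebra
    then have "cmod ((y k ^ 2 - 4) * (x k ^ 2 - 4)) \<le> (C * cmod ?e + 2 * cmod ?e') * (C\<^sup>2 + 4) / 2"
      by (rule norm_defect_product_le) (use big C in auto)
    then show ?thesis by (simp only: mult.commute[of "y k ^ 2 - 4"])
  qed
  moreover have "\<mu> - 4 = ?e\<^sup>2 / 4 - ?D / 4"
    using fricke_sub_4[OF rel[of k]] fr by (simp add: diff_divide_distrib)
  then have "cmod (\<mu> - 4) \<le> cmod ?e ^ 2 / 4 + cmod ?D / 4"
    using norm_triangle_ineq4[of "?e\<^sup>2 / 4" "?D / 4"] by (simp add: norm_power norm_divide)
  ultimately show ?thesis by simp
qed

lemma descending_path_fricke_eq_4:
  assumes path: "descending_path x y m d" and fr: "\<And>k. fricke (x k) (y k) (m k) = \<mu>"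
  shows "\<mu> = 4"
proof -
  define C where "C = cmod (x 0) * cmod (y 0) / 2"
  define e where "e k = cmod (m k - d k)" for k
  have e: "e \<longlonglongrightarrow> 0"
    using tendsto_norm[OF descending_path_diff_tendsto_0[OF path]] unfolding e_def by simp
  have "(\<lambda>k. e k ^ 2 / 4 + (C * e k + 2 * e (Suc k)) * (C\<^sup>2 + 4) / 8) \<longlonglongrightarrow>
      0 ^ 2 / 4 + (C * 0 + 2 * 0) * (C\<^sup>2 + 4) / 8"
    by (intro tendsto_intros e LIMSEQ_Suc[OF e]) auto
  moreover have "cmod (\<mu> - 4) \<le> e k ^ 2 / 4 + (C * e k + 2 * e (Suc k)) * (C\<^sup>2 + 4) / 8" for k
    unfolding e_def C_def
    using descending_path_fricke_defect_le[OF path fr descending_path_bounded[OF path]] .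
  ultimately have "cmod (\<mu> - 4) \<le> 0"
    by (intro LIMSEQ_le_const) (auto simp del: power_eq_0_iff)
  then show ?thesis by simp
qed

section \<open>Growth beyond an escaping edge\<close>

definition growth_bound :: "(int \<times> int \<Rightarrow> complex) \<Rightarrow> real \<Rightarrow> int \<Rightarrow> int \<times> int \<Rightarrow> bool" where
  "growth_bound f c S w \<longleftrightarrow> (\<forall>j::nat. 2 ^ j * S < farey_size w \<longrightarrow> c * (c / 2) ^ j \<le> cmod (f w))"

definition escaping_edge ::
    "(int \<times> int \<Rightarrow> complex) \<Rightarrow> real \<Rightarrow> int \<Rightarrow> int \<times> int \<Rightarrow> int \<times> int \<Rightarrow> bool" where
  "escaping_edge f c S u v \<longleftrightarrow> farey_pair u v \<and> 1 \<le> fst u \<and> 1 \<le> fst v \<and>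
     c \<le> cmod (f u) \<and> c \<le> cmod (f v) \<and> growth_bound f c S u \<and> growth_bound f c S v \<and>
     cmod (f (farey_diff u v)) \<le> cmod (f (u + v))"

lemma growth_bound_add:
  assumes gu: "growth_bound f c S u" and gv: "growth_bound f c S v" and c: "2 \<le> c"
    and m: "c \<le> cmod (f (u + v))" "c / 2 * cmod (f u) \<le> cmod (f (u + v))"
      "c / 2 * cmod (f v) \<le> cmod (f (u + v))"
  shows "growth_bound f c S (u + v)"
  unfolding growth_bound_def
proof (intro allI impI)
  fix j :: nat assume j: "2 ^ j * S < farey_size (u + v)"
  show "c * (c / 2) ^ j \<le> cmod (f (u + v))"
  proof (cases j)
    case 0
    then show ?thesis using m(1) by simp
  next
    case (Suc i)
    then have "2 * (2 ^ i * S) < farey_size u + farey_size v" using j by simp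
    then have "2 ^ i * S < farey_size u \<or> 2 ^ i * S < farey_size v" by linarith
    then have "c * (c / 2) ^ i \<le> cmod (f u) \<or> c * (c / 2) ^ i \<le> cmod (f v)"
      using gu gv unfolding growth_bound_def by blast
    then have "c / 2 * (c * (c / 2) ^ i) \<le> c / 2 * cmod (f u) \<or>
        c / 2 * (c * (c / 2) ^ i) \<le> c / 2 * cmod (f v)"
      using c by (elim disjE) (simp_all add: mult_left_mono)
    moreover have "c * (c / 2) ^ j = c / 2 * (c * (c / 2) ^ i)" using Suc by simp
    ultimately show ?thesis using m(2,3) by linarith
  qed
qed

lemma escaping_edge_child:
  assumes f: "edge_relation f" and e: "escaping_edge f c S u v" and c: "2 \<le> c"
  shows "c / 2 * cmod (f u) \<le> cmod (f (u + v))" "c / 2 * cmod (f v) \<le> cmod (f (u + v))"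
    "c \<le> cmod (f (u + v))" "growth_bound f c S (u + v)"
proof -
  let ?m = "f (u + v)"
  have "cmod (f u) * cmod (f v) = cmod (?m + f (farey_diff u v))"
    using edge_relationD[OF f] e unfolding escaping_edge_def by (simp add: norm_mult)
  also have "\<dots> \<le> 2 * cmod ?m"
    using norm_triangle_ineq[of ?m "f (farey_diff u v)"] e unfolding escaping_edge_def by simp
  finally have uv: "cmod (f u) * cmod (f v) \<le> 2 * cmod ?m" .
  have hu: "c \<le> cmod (f u)" and hv: "c \<le> cmod (f v)" using e unfolding escaping_edge_def by auto
  show gu: "c / 2 * cmod (f u) \<le> cmod ?m"
    using uv mult_right_mono[OF hv, of "cmod (f u)"] by (simp add: algebra_simps)
  show gv: "c / 2 * cmod (f v) \<le> cmod ?m"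
    using uv mult_right_mono[OF hu, of "cmod (f v)"] by (simp add: algebra_simps)
  have "c \<le> c / 2 * cmod (f u)" using mult_mono[OF _ hu, of 1 "c / 2"] c by simp
  then show gm: "c \<le> cmod ?m" using gu by simp
  show "growth_bound f c S (u + v)"
    using growth_bound_add[OF _ _ c gm gu gv] e unfolding escaping_edge_def by blast
qed

lemma escaping_edge_add_left:
  assumes f: "edge_relation f" and e: "escaping_edge f c S u v" and c: "2 \<le> c"
  shows "escaping_edge f c S u (u + v)"
proof -
  have uv: "farey_pair u v" "1 \<le> fst u" "1 \<le> fst v" and hu: "c \<le> cmod (f u)"
    using e unfolding escaping_edge_def by auto
  have uuv: "farey_pair u (u + v)" using farey_pair_add_left[OF uv(1)] .
  have diff: "farey_diff u (u + v) = v" using uv(1) by (simp add: farey_diff_add_left farey_pair_def)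
  have grow: "cmod (f v) \<le> cmod (f (u + v))"
    using escaping_edge_child(2)[OF f e c] mult_right_mono[of 1 "c / 2" "cmod (f v)"] c by simp
  have "2 * cmod (f (u + v)) \<le> cmod (f u) * cmod (f (u + v))"
    using hu c by (intro mult_right_mono) auto
  also have "\<dots> = cmod (f (u + (u + v)) + f v)"
    using edge_relationD[OF f uuv] uv diff by (simp add: norm_mult)
  also have "\<dots> \<le> cmod (f (u + (u + v))) + cmod (f v)" by (rule norm_triangle_ineq)
  finally have "cmod (f v) \<le> cmod (f (u + (u + v)))" using grow by simp
  then show ?thesis
    using e uuv diff escaping_edge_child[OF f e c] uv unfolding escaping_edge_def by simp
qed

lemma escaping_edge_add_right:
  assumes f: "edge_relation f" and e: "escaping_edge f c S u v" and c: "2 \<le> c"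
  shows "escaping_edge f c S (u + v) v"
proof -
  have uv: "farey_pair u v" "1 \<le> fst u" "1 \<le> fst v" and hv: "c \<le> cmod (f v)"
    using e unfolding escaping_edge_def by auto
  have uvv: "farey_pair (u + v) v" using farey_pair_add_right[OF uv(1)] .
  have diff: "farey_diff (u + v) v = u" using uv(1) by (simp add: farey_diff_add_right farey_pair_def)
  have grow: "cmod (f u) \<le> cmod (f (u + v))"
    using escaping_edge_child(1)[OF f e c] mult_right_mono[of 1 "c / 2" "cmod (f u)"] c by simp
  have "2 * cmod (f (u + v)) \<le> cmod (f v) * cmod (f (u + v))"
    using hv c by (intro mult_right_mono) auto
  also have "\<dots> = cmod (f ((u + v) + v) + f u)"
    using edge_relationD[OF f uvv] uv diff by (simp add: norm_mult mult.commute)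
  also have "\<dots> \<le> cmod (f ((u + v) + v)) + cmod (f u)" by (rule norm_triangle_ineq)
  finally have "cmod (f u) \<le> cmod (f ((u + v) + v))" using grow by simp
  then show ?thesis
    using e uvv diff escaping_edge_child[OF f e c] uv unfolding escaping_edge_def by simp
qed

lemma escaping_edge_growth:
  assumes f: "edge_relation f" and c: "2 \<le> c"
  shows "escaping_edge f c S u v \<Longrightarrow> coprime (fst w) (snd w) \<Longrightarrow> 0 < cross u w \<Longrightarrow> 0 < cross w v \<Longrightarrow>
    c \<le> cmod (f w) \<and> growth_bound f c S w"
proof (induction "nat (farey_size w - farey_size u - farey_size v)" arbitrary: u v rule: less_induct)
  case less
  have uv: "farey_pair u v" using less.prems(1) unfolding escaping_edge_def by blast
  note cases = farey_cone_cases[OF uv less.prems(2-4)]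
  have pos: "1 \<le> farey_size u" "1 \<le> farey_size v" using farey_size_pos[OF uv] .
  consider "w = u + v" | "0 < cross w (u + v)" | "0 < cross (u + v) w" using cases(2) by blast
  then show ?case
  proof cases
    case 1
    then show ?thesis using escaping_edge_child[OF f less.prems(1) c] by simp
  next
    case 2
    have e: "escaping_edge f c S u (u + v)" using escaping_edge_add_left[OF f less.prems(1) c] .
    then have "farey_size u + farey_size (u + v) \<le> farey_size w"
      using farey_cone_cases(1)[of u "u + v" w] less.prems 2 unfolding escaping_edge_def by blast
    then show ?thesis using less.hyps[OF _ e] less.prems 2 pos by simp
  next
    case 3
    have e: "escaping_edge f c S (u + v) v" using escaping_edge_add_right[OF f less.prems(1) c] .
    then have "farey_size (u + v) + farey_size v \<le> farey_size w"
      using farey_cone_cases(1)[of "u + v" v w] less.prems 3 unfolding escaping_edge_def by blast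
    then show ?thesis using less.hyps[OF _ e] less.prems 3 pos by simp
  qed
qed

lemma growth_bound_small:
  assumes "0 \<le> S" "farey_size w \<le> S"
  shows "growth_bound f c S w"
  unfolding growth_bound_def
proof (intro allI impI)
  fix j :: nat assume "2 ^ j * S < farey_size w"
  moreover have "S \<le> 2 ^ j * S" using assms(1) by (simp add: mult_le_cancel_right1)
  ultimately show "c * (c / 2) ^ j \<le> cmod (f w)" using assms(2) by simp
qed

lemma escaping_edge_min_max:
  assumes uv: "farey_pair u v" "1 \<le> fst u" "1 \<le> fst v"
    and arrow: "cmod (f (farey_diff u v)) \<le> cmod (f (u + v))"
  shows "escaping_edge f (min (cmod (f u)) (cmod (f v))) (max (farey_size u) (farey_size v)) u v"
proof -
  have "0 \<le> max (farey_size u) (farey_size v)" using farey_size_pos[OF uv(1)] by simp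
  then show ?thesis using uv arrow growth_bound_small unfolding escaping_edge_def by simp
qed

lemma finite_small_traces_beyond_escaping_edge:
  assumes f: "edge_relation f" and uv: "farey_pair u v" "1 \<le> fst u" "1 \<le> fst v"
    and big: "2 < cmod (f u)" "2 < cmod (f v)"
    and arrow: "cmod (f (farey_diff u v)) \<le> cmod (f (u + v))"
  shows "finite {w. coprime (fst w) (snd w) \<and> 0 < cross u w \<and> 0 < cross w v \<and> cmod (f w) < K}"
proof -
  define c S where "c = min (cmod (f u)) (cmod (f v))" and "S = max (farey_size u) (farey_size v)"
  have c: "2 < c" using big unfolding c_def by simp
  have e: "escaping_edge f c S u v" unfolding c_def S_def using escaping_edge_min_max[OF uv arrow] .
  obtain j :: nat where "K / c < (c / 2) ^ j" using real_arch_pow[of "c / 2" "K / c"] c by auto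
  then have j: "K < c * (c / 2) ^ j" using c by (simp add: field_simps)
  define M where "M = 2 ^ j * S"
  have "{w. coprime (fst w) (snd w) \<and> 0 < cross u w \<and> 0 < cross w v \<and> cmod (f w) < K} \<subseteq> {0..M} \<times> {0..M}"
  proof safe
    fix a b assume w: "coprime (fst (a, b)) (snd (a, b))" "0 < cross u (a, b)" "0 < cross (a, b) v"
      "cmod (f (a, b)) < K"
    have "0 \<le> a" "0 \<le> b" using farey_cone_nonneg[OF uv(1) w(2,3)] by simp_all
    moreover have "farey_size (a, b) \<le> M"
    proof (rule ccontr)
      assume "\<not> ?thesis"
      then have "c * (c / 2) ^ j \<le> cmod (f (a, b))"
        using escaping_edge_growth[OF f _ e w(1-3)] c unfolding growth_bound_def M_def by simp
      then show False using j w(4) by simp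
    qed
    ultimately show "a \<in> {0..M}" "b \<in> {0..M}" unfolding farey_size_def by simp_all
  qed
  then show ?thesis by (rule finite_subset) simp
qed

section \<open>Approximating an irrational slope\<close>

definition rslope :: "int \<times> int \<Rightarrow> real" where
  "rslope c = real_of_int (snd c) / real_of_int (fst c)"

lemma cross_sign_iff_rslope:
  assumes "0 < fst u" "0 < fst w"
  shows "0 < cross u w \<longleftrightarrow> rslope u < rslope w" "0 \<le> cross u w \<longleftrightarrow> rslope u \<le> rslope w"
proof -
  have "rslope u < rslope w \<longleftrightarrow> real_of_int (snd u * fst w) < real_of_int (snd w * fst u)"
    "rslope u \<le> rslope w \<longleftrightarrow> real_of_int (snd u * fst w) \<le> real_of_int (snd w * fst u)"
    using assms by (simp_all add: rslope_def field_simps)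
  then show "0 < cross u w \<longleftrightarrow> rslope u < rslope w" "0 \<le> cross u w \<longleftrightarrow> rslope u \<le> rslope w"
    unfolding of_int_less_iff of_int_le_iff by (simp_all add: cross_def algebra_simps)
qed

primrec farey_ray :: "real \<Rightarrow> nat \<Rightarrow> (int \<times> int) \<times> (int \<times> int)" where
  "farey_ray t 0 = ((1, \<lfloor>t\<rfloor>), (1, \<lfloor>t\<rfloor> + 1))"
| "farey_ray t (Suc k) = (case farey_ray t k of (u, v) \<Rightarrow>
     if rslope (u + v) < t then (u + v, v) else (u, u + v))"

definition farey_bracket :: "real \<Rightarrow> nat \<Rightarrow> int \<times> int \<Rightarrow> int \<times> int \<Rightarrow> bool" where
  "farey_bracket t k u v \<longleftrightarrow> farey_pair u v \<and> 1 \<le> fst u \<and> 1 \<le> fst v \<and>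
     rslope u < t \<and> t < rslope v \<and> int k + 2 \<le> fst u + fst v"

lemma farey_ray_bracket:
  assumes "0 < t" "t \<notin> \<rat>"
  shows "farey_bracket t k (fst (farey_ray t k)) (snd (farey_ray t k))"
proof (induction k)
  case 0
  have "real_of_int \<lfloor>t\<rfloor> \<noteq> t" using assms(2) by (metis Rats_of_int)
  then have "real_of_int \<lfloor>t\<rfloor> < t" by (simp add: order_less_le)
  then show ?case
    using assms(1) by (simp add: farey_bracket_def farey_pair_def cross_def rslope_def)
next
  case (Suc k)
  obtain u v where uv: "farey_ray t k = (u, v)" by (metis surj_pair)
  have b: "farey_bracket t k u v" using Suc uv by simp
  have "rslope (u + v) \<noteq> t"
  proof
    assume "rslope (u + v) = t"
    then have "t = of_int (snd (u + v)) / of_int (fst (u + v))" by (simp add: rslope_def)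
    then show False using assms(2) by (metis Rats_divide Rats_of_int)
  qed
  then show ?case
    using b farey_pair_add_left[of u v] farey_pair_add_right[of u v] uv
    by (auto simp: farey_bracket_def)
qed

lemma farey_bracket_rslope_close:
  assumes b: "farey_bracket t k u v" and w: "0 < fst w" "0 \<le> cross u w" "0 \<le> cross w v"
  shows "\<bar>rslope w - t\<bar> \<le> 1 / real (k + 1)"
proof -
  have h: "1 \<le> fst u" "1 \<le> fst v" "cross u v = 1" "rslope u < t" "t < rslope v" "int k + 2 \<le> fst u + fst v"
    using b unfolding farey_bracket_def farey_pair_def by auto
  have "rslope u \<le> rslope w" "rslope w \<le> rslope v"
    using w h cross_sign_iff_rslope(2)[of u w] cross_sign_iff_rslope(2)[of w v] by simp_all
  moreover have "rslope v - rslope u = 1 / (real_of_int (fst u) * real_of_int (fst v))"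
  proof -
    have "real_of_int (fst u * snd v - fst v * snd u) = 1" using h(3) unfolding cross_def by simp
    then show ?thesis using h(1,2) by (simp add: rslope_def field_simps)
  qed
  moreover have "real (k + 1) \<le> real_of_int (fst u) * real_of_int (fst v)"
  proof -
    have "0 \<le> (fst u - 1) * (fst v - 1)" using h by simp
    then have "int k + 1 \<le> fst u * fst v" using h(6) by (simp add: algebra_simps)
    then have "real_of_int (int k + 1) \<le> real_of_int (fst u * fst v)" by (simp only: of_int_le_iff)
    then show ?thesis by simp
  qed
  then have "1 / (real_of_int (fst u) * real_of_int (fst v)) \<le> 1 / real (k + 1)" by (simp add: frac_le)
  ultimately show ?thesis using h(4,5) by linarith
qed

lemma farey_path_descending:
  assumes f: "edge_relation f"
    and path: "\<And>k. farey_pair (P k) (Q k)" "\<And>k. 1 \<le> fst (P k)" "\<And>k. 1 \<le> fst (Q k)"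
      "\<And>k. (P (Suc k), Q (Suc k)) \<in> {(P k + Q k, Q k), (P k, P k + Q k)}"
    and big: "\<And>k. 2 < cmod (f (P k))" "\<And>k. 2 < cmod (f (Q k))"
    and desc: "\<And>k. cmod (f (P k + Q k)) < cmod (f (farey_diff (P k) (Q k)))"
  shows "descending_path (f \<circ> P) (f \<circ> Q) (\<lambda>k. f (P k + Q k)) (\<lambda>k. f (farey_diff (P k) (Q k)))"
  unfolding descending_path_def
proof (intro allI conjI)
  fix k
  have nonneg: "0 \<le> fst (P k)" "0 \<le> snd (P k)" "0 \<le> fst (Q k)" "0 \<le> snd (Q k)"
    using path(1)[of k] unfolding farey_pair_def by auto
  show "f (P k + Q k) + f (farey_diff (P k) (Q k)) = (f \<circ> P) k * (f \<circ> Q) k"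
    using edge_relationD[OF f path(1-3)] by simp
  show "(f \<circ> P) (Suc k) = (f \<circ> P) k \<and> (f \<circ> Q) (Suc k) = f (P k + Q k) \<and>
      f (farey_diff (P (Suc k)) (Q (Suc k))) = (f \<circ> Q) k \<or>
    (f \<circ> P) (Suc k) = f (P k + Q k) \<and> (f \<circ> Q) (Suc k) = (f \<circ> Q) k \<and>
      f (farey_diff (P (Suc k)) (Q (Suc k))) = (f \<circ> P) k"
    using path(4)[of k] nonneg by (auto simp: farey_diff_add_left farey_diff_add_right)
qed (use big desc in auto)

lemma inj_eventually_in_infinite:
  assumes "inj X" "\<forall>\<^sub>F n in sequentially. X n \<in> F"
  shows "infinite F"
proof
  assume "finite F"
  obtain N where "\<And>n. N \<le> n \<Longrightarrow> X n \<in> F" using assms(2) unfolding eventually_sequentially by blast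
  then have "X ` {N..} \<subseteq> F" by auto
  then have "finite (X ` {N..})" using \<open>finite F\<close> by (rule finite_subset)
  then have "finite {N..}" using finite_imageD inj_on_subset[OF assms(1)] by blast
  then show False using infinite_Ici by blast
qed

lemma farey_bracket_endpoints_near:
  assumes b: "farey_bracket t k u v" and k: "1 / real (k + 1) < min \<epsilon> t" and w: "w = u \<or> w = v"
  shows "0 < fst w" "0 < snd w" "coprime (fst w) (snd w)" "\<bar>rslope w - t\<bar> < \<epsilon>"
proof -
  have uv: "farey_pair u v" "1 \<le> fst u" "1 \<le> fst v" using b unfolding farey_bracket_def by auto
  show "0 < fst w" using uv w by auto
  have "0 \<le> cross u w" "0 \<le> cross w v"
    using w uv unfolding farey_pair_def cross_def by auto
  then have "\<bar>rslope w - t\<bar> < min \<epsilon> t"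
    using farey_bracket_rslope_close[OF b \<open>0 < fst w\<close>] k by fastforce
  then show "\<bar>rslope w - t\<bar> < \<epsilon>" by simp
  have "0 < rslope w" using \<open>\<bar>rslope w - t\<bar> < min \<epsilon> t\<close> by linarith
  then show "0 < snd w" using \<open>0 < fst w\<close> by (simp add: rslope_def zero_less_divide_iff)
  show "coprime (fst w) (snd w)" using cross_eq_1_coprime uv w unfolding farey_pair_def by blast
qed

lemma bounded_traces_exclude_escaping_edge:
  assumes f: "edge_relation f" and b: "farey_bracket t k u v"
    and big: "2 < cmod (f u)" "2 < cmod (f v)"
    and arrow: "cmod (f (farey_diff u v)) \<le> cmod (f (u + v))"
    and X: "inj X" "\<And>n. 0 < fst (X n)" "\<And>n. coprime (fst (X n)) (snd (X n))"
      "(\<lambda>n. rslope (X n)) \<longlonglongrightarrow> t" "\<And>n. 0 < snd (X n) \<Longrightarrow> cmod (f (X n)) < K"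
  shows False
proof -
  have uv: "farey_pair u v" "1 \<le> fst u" "1 \<le> fst v" "rslope u < t" "t < rslope v"
    using b unfolding farey_bracket_def by auto
  let ?F = "{w. coprime (fst w) (snd w) \<and> 0 < cross u w \<and> 0 < cross w v \<and> cmod (f w) < K}"
  have "\<forall>\<^sub>F n in sequentially. rslope u < rslope (X n) \<and> rslope (X n) < rslope v"
    using order_tendstoD(1)[OF X(4) uv(4)] order_tendstoD(2)[OF X(4) uv(5)] by (rule eventually_conj)
  then have "\<forall>\<^sub>F n in sequentially. X n \<in> ?F"
  proof (rule eventually_mono)
    fix n assume n: "rslope u < rslope (X n) \<and> rslope (X n) < rslope v"
    have "0 \<le> rslope u" using uv(1) by (simp add: rslope_def farey_pair_def)
    then have "0 < rslope (X n)" using n by linarith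
    then have "0 < snd (X n)" using X(2)[of n] by (simp add: rslope_def zero_less_divide_iff)
    then show "X n \<in> ?F"
      using n X(2,3,5)[of n] uv(2,3) cross_sign_iff_rslope(1)[of u "X n"] cross_sign_iff_rslope(1)[of "X n" v]
      by simp
  qed
  then have "infinite ?F" using inj_eventually_in_infinite[OF X(1)] by blast
  then show False using finite_small_traces_beyond_escaping_edge[OF f uv(1-3) big arrow] by blast
qed

lemma small_trace_near_irrational:
  fixes f :: "int \<times> int \<Rightarrow> complex"
  assumes f: "edge_relation f" and fr: "\<And>u v. farey_pair u v \<Longrightarrow> fricke (f u) (f v) (f (u + v)) = \<mu>"
    and \<mu>: "\<mu> \<noteq> 4" and t: "0 < t" "t \<notin> \<rat>"
    and X: "inj X" "\<And>n. 0 < fst (X n)" "\<And>n. coprime (fst (X n)) (snd (X n))"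
      "(\<lambda>n. rslope (X n)) \<longlonglongrightarrow> t" "\<And>n. 0 < snd (X n) \<Longrightarrow> cmod (f (X n)) < K"
    and \<epsilon>: "0 < \<epsilon>"
  shows "\<exists>w. 0 < fst w \<and> 0 < snd w \<and> coprime (fst w) (snd w) \<and> \<bar>rslope w - t\<bar> < \<epsilon> \<and> cmod (f w) \<le> 2"
proof (rule ccontr)
  assume "\<not> ?thesis"
  then have near: "2 < cmod (f w)"
    if "0 < fst w" "0 < snd w" "coprime (fst w) (snd w)" "\<bar>rslope w - t\<bar> < \<epsilon>" for w
    using that by force
  obtain k0 :: nat where k0: "1 / real (k0 + 1) < min \<epsilon> t"
    using reals_Archimedean[of "min \<epsilon> t"] \<epsilon> t by (auto simp: inverse_eq_divide)
  define P Q where "P k = fst (farey_ray t (k + k0))" and "Q k = snd (farey_ray t (k + k0))" for k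
  have br: "farey_bracket t (k + k0) (P k) (Q k)" for k
    unfolding P_def Q_def using farey_ray_bracket[OF t] .
  have pair: "farey_pair (P k) (Q k)" "1 \<le> fst (P k)" "1 \<le> fst (Q k)" for k
    using br[of k] unfolding farey_bracket_def by auto
  have close: "1 / real (k + k0 + 1) < min \<epsilon> t" for k
    using k0 frac_le[of 1 1 "real (k0 + 1)" "real (k + k0 + 1)"] by simp
  have "2 < cmod (f w)" if "w = P k \<or> w = Q k" for w k
    using farey_bracket_endpoints_near[OF br close that] by (intro near)
  then have big: "2 < cmod (f (P k))" "2 < cmod (f (Q k))" for k by blast+
  show False
  proof (cases "\<exists>k. cmod (f (farey_diff (P k) (Q k))) \<le> cmod (f (P k + Q k))")
    case True
    then show False using bounded_traces_exclude_escaping_edge[OF f br big _ X] by blast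
  next
    case False
    have "descending_path (f \<circ> P) (f \<circ> Q) (\<lambda>k. f (P k + Q k)) (\<lambda>k. f (farey_diff (P k) (Q k)))"
    proof (rule farey_path_descending[OF f pair _ big])
      show "(P (Suc k), Q (Suc k)) \<in> {(P k + Q k, Q k), (P k, P k + Q k)}" for k
        unfolding P_def Q_def by (simp split: prod.split)
    qed (use False in \<open>simp add: not_le\<close>)
    then have "\<mu> = 4" using descending_path_fricke_eq_4 fr[OF pair(1)] by simp
    with \<mu> show False ..
  qed
qed

section \<open>Curves, slopes and end invariants\<close>

lemma tr_curve_nonneg: "0 < a \<Longrightarrow> 0 \<le> b \<Longrightarrow> tr_curve A B (a, b) = farey_trace A B (a, b)"
  by (simp add: tr_curve_def farey_trace_def curve_word_nonneg)

lemma tr_curve_neg: "0 < a \<Longrightarrow> b < 0 \<Longrightarrow> tr_curve A B (a, b) = farey_trace A (sl2_inv B) (a, - b)"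
  by (simp add: tr_curve_def farey_trace_def eval_curve_word_neg)

lemma tr_curve_reflect:
  assumes "0 < a" "b \<noteq> 0"
  shows "tr_curve A (sl2_inv B) (a, - b) = tr_curve A B (a, b)"
proof (cases "b < 0")
  case True
  then show ?thesis using assms tr_curve_nonneg[of a "- b"] tr_curve_neg[of a b] by simp
next
  case False
  then show ?thesis using assms tr_curve_nonneg[of a b] tr_curve_neg[of a "- b" A "sl2_inv B"] by simp
qed

lemma curves_iff: "(a, b) \<in> curves \<longleftrightarrow> coprime a b \<and> (0 < a \<or> a = 0 \<and> b = 1)"
  by (simp add: curves_def)

lemma curve_small_trace_near_pos_irrational:
  assumes \<kappa>: "\<kappa> \<noteq> 2" "in_X_kappa \<kappa> A B" and t: "0 < t" "t \<notin> \<rat>"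
    and X: "inj X" "\<And>n. X n \<in> curves" "\<And>n. 0 < fst (X n)" "(\<lambda>n. rslope (X n)) \<longlonglongrightarrow> t"
      "\<And>n. 0 < snd (X n) \<Longrightarrow> cmod (tr_curve A B (X n)) < K"
    and \<epsilon>: "0 < \<epsilon>"
  shows "\<exists>w\<in>curves. 0 < fst w \<and> 0 < snd w \<and> \<bar>rslope w - t\<bar> < \<epsilon> \<and> cmod (tr_curve A B w) \<le> 2"
proof -
  have det: "det A = 1" "det B = 1" and tr: "trace (A ** B ** sl2_inv A ** sl2_inv B) = \<kappa>"
    using \<kappa>(2) by (auto simp: in_X_kappa_iff)
  have cop: "coprime (fst (X n)) (snd (X n))" for n using X(2)[of n] by (cases "X n") (simp add: curves_iff)
  have "\<exists>w. 0 < fst w \<and> 0 < snd w \<and> coprime (fst w) (snd w) \<and> \<bar>rslope w - t\<bar> < \<epsilon> \<and>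
      cmod (farey_trace A B w) \<le> 2"
  proof (rule small_trace_near_irrational[where \<mu> = "\<kappa> + 2", OF _ _ _ t X(1,3) cop X(4) _ \<epsilon>])
    show "edge_relation (farey_trace A B)" by (rule edge_relation_farey_trace[OF det])
    show "fricke (farey_trace A B u) (farey_trace A B v) (farey_trace A B (u + v)) = \<kappa> + 2"
      if "farey_pair u v" for u v
      using fricke_farey_trace[OF det that] tr by simp
    show "\<kappa> + 2 \<noteq> 4" using \<kappa>(1) by simp
    show "cmod (farey_trace A B (X n)) < K" if "0 < snd (X n)" for n
      using X(3,5)[of n] that tr_curve_nonneg[of "fst (X n)" "snd (X n)"] by simp
  qed
  then obtain w where w: "0 < fst w" "0 < snd w" "coprime (fst w) (snd w)" "\<bar>rslope w - t\<bar> < \<epsilon>"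
      "cmod (farey_trace A B w) \<le> 2"
    by blast
  moreover have "w \<in> curves" using w by (cases w) (simp add: curves_iff)
  moreover have "tr_curve A B w = farey_trace A B w" using tr_curve_nonneg[of "fst w" "snd w"] w by simp
  ultimately show ?thesis by auto
qed

lemma curve_small_trace_near_irrational:
  assumes \<kappa>: "\<kappa> \<noteq> 2" "in_X_kappa \<kappa> A B" and t: "t \<notin> \<rat>"
    and X: "inj X" "\<And>n. X n \<in> curves" "\<And>n. 0 < fst (X n)" "(\<lambda>n. rslope (X n)) \<longlonglongrightarrow> t"
      "\<And>n. cmod (tr_curve A B (X n)) < K"
    and \<epsilon>: "0 < \<epsilon>"
  shows "\<exists>w\<in>curves. 0 < fst w \<and> \<bar>rslope w - t\<bar> < \<epsilon> \<and> cmod (tr_curve A B w) \<le> 2"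
proof -
  have "t \<noteq> 0" using t by auto
  then consider "0 < t" | "0 < - t" by linarith
  then show ?thesis
  proof cases
    case 1
    then show ?thesis using curve_small_trace_near_pos_irrational[OF \<kappa> 1 t X(1-4) _ \<epsilon>] X(5) by blast
  next
    case 2
    define reflect :: "int \<times> int \<Rightarrow> int \<times> int" where "reflect w = (fst w, - snd w)" for w
    have refl: "reflect (reflect w) = w" "rslope (reflect w) = - rslope w" for w
      by (simp_all add: reflect_def rslope_def)
    have refl_curves: "reflect w \<in> curves" if "w \<in> curves" "0 < fst w" for w
      using that by (cases w) (simp add: curves_iff reflect_def)
    have "\<exists>w\<in>curves. 0 < fst w \<and> 0 < snd w \<and> \<bar>rslope w - - t\<bar> < \<epsilon> \<and>
        cmod (tr_curve A (sl2_inv B) w) \<le> 2"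
    proof (rule curve_small_trace_near_pos_irrational[OF \<kappa>(1) in_X_kappa_sl2_inv[OF \<kappa>(2)] 2 _ _ _ _ _ _ \<epsilon>])
      show "- t \<notin> \<rat>" using t by (metis Rats_minus_iff)
      show "inj (reflect \<circ> X)" using X(1) by (metis comp_inj_on inj_on_inverseI refl(1))
      show "(reflect \<circ> X) n \<in> curves" "0 < fst ((reflect \<circ> X) n)" for n
        using refl_curves X(2,3) by (simp_all add: reflect_def)
      show "(\<lambda>n. rslope ((reflect \<circ> X) n)) \<longlonglongrightarrow> - t" using tendsto_minus[OF X(4)] refl by simp
      show "cmod (tr_curve A (sl2_inv B) ((reflect \<circ> X) n)) < K" if "0 < snd ((reflect \<circ> X) n)" for n
        using X(3,5)[of n] that tr_curve_reflect[of "fst (X n)" "snd (X n)"] by (simp add: reflect_def)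
    qed
    then obtain w where w: "w \<in> curves" "0 < fst w" "0 < snd w" "\<bar>rslope w - - t\<bar> < \<epsilon>"
        "cmod (tr_curve A (sl2_inv B) w) \<le> 2"
      by blast
    moreover have "tr_curve A B (reflect w) = tr_curve A (sl2_inv B) w"
      using tr_curve_reflect[of "fst w" "- snd w" A B] w by (simp add: reflect_def)
    ultimately show ?thesis using refl_curves refl(2)[of w] by (intro bexI[of _ "reflect w"]) (auto simp: reflect_def)
  qed
qed

lemma slope_eq_Some_rslope: "fst c \<noteq> 0 \<Longrightarrow> slope c = Some (rslope c)"
  by (cases c) (simp add: slope_def rslope_def)

lemma pl_emb_Some_inverse: "fst (pl_emb (Some s)) / (1 - snd (pl_emb (Some s))) = s"
  and snd_pl_emb_Some_less_1: "snd (pl_emb (Some s)) < 1"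
proof -
  have p: "0 < 1 + s\<^sup>2" by (simp add: add_pos_nonneg)
  have "1 - (s\<^sup>2 - 1) / (1 + s\<^sup>2) = 2 / (1 + s\<^sup>2)" using p by (simp add: field_simps)
  then show "fst (pl_emb (Some s)) / (1 - snd (pl_emb (Some s))) = s"
    using p by (simp add: pl_emb_def field_simps)
  show "snd (pl_emb (Some s)) < 1" using p by (simp add: pl_emb_def field_simps)
qed

lemma pl_tendsto_SomeD:
  assumes c: "\<And>n. c n \<in> curves" and lim: "pl_tendsto (\<lambda>n. slope (c n)) (Some t)"
  shows "\<forall>\<^sub>F n in sequentially. 0 < fst (c n)" "(\<lambda>n. rslope (c n)) \<longlonglongrightarrow> t"
proof -
  let ?e = "\<lambda>n. pl_emb (slope (c n))"
  have L: "?e \<longlonglongrightarrow> pl_emb (Some t)" using lim unfolding pl_tendsto_def .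
  have "\<forall>\<^sub>F n in sequentially. snd (?e n) < 1"
    using tendsto_snd[OF L] snd_pl_emb_Some_less_1[of t] by (rule order_tendstoD)
  moreover have "0 < fst (c n)" if "snd (?e n) < 1" for n
    using c[of n] that by (cases "c n") (auto simp: curves_iff slope_def pl_emb_def)
  ultimately show pos: "\<forall>\<^sub>F n in sequentially. 0 < fst (c n)" by (rule eventually_mono)
  have "(\<lambda>n. fst (?e n) / (1 - snd (?e n))) \<longlonglongrightarrow> fst (pl_emb (Some t)) / (1 - snd (pl_emb (Some t)))"
    using snd_pl_emb_Some_less_1[of t] by (intro tendsto_intros L) auto
  then have "(\<lambda>n. fst (?e n) / (1 - snd (?e n))) \<longlonglongrightarrow> t" by (simp only: pl_emb_Some_inverse)
  moreover have "\<forall>\<^sub>F n in sequentially. fst (?e n) / (1 - snd (?e n)) = rslope (c n)"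
    using pos by (rule eventually_mono) (simp add: slope_eq_Some_rslope pl_emb_Some_inverse)
  ultimately show "(\<lambda>n. rslope (c n)) \<longlonglongrightarrow> t" by (rule Lim_transform_eventually)
qed

lemma pl_tendsto_SomeI:
  assumes "(\<lambda>n. rslope (c n)) \<longlonglongrightarrow> t" "\<And>n. fst (c n) \<noteq> 0"
  shows "pl_tendsto (\<lambda>n. slope (c n)) (Some t)"
proof -
  have "0 < 1 + t\<^sup>2" by (simp add: add_pos_nonneg)
  then have "(\<lambda>n. pl_emb (Some (rslope (c n)))) \<longlonglongrightarrow> pl_emb (Some t)"
    unfolding pl_emb_def option.case by (intro tendsto_intros assms(1)) auto
  then show ?thesis unfolding pl_tendsto_def by (simp add: slope_eq_Some_rslope assms(2))
qed

lemma not_slope_curve_irrational: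
  assumes "lam \<notin> slope ` curves"
  obtains t where "lam = Some t" "t \<notin> \<rat>"
proof (cases lam)
  case None
  have "slope (0, 1) = None" "(0, 1) \<in> curves" by (simp_all add: slope_def curves_iff)
  then show ?thesis using None assms by force
next
  case (Some t)
  have "t \<notin> \<rat>"
  proof
    assume "t \<in> \<rat>"
    then obtain a b :: int where ab: "0 < b" "coprime a b" "t = of_int a / of_int b" by (rule Rats_cases')
    then have "(b, a) \<in> curves" "slope (b, a) = lam"
      using Some by (simp_all add: curves_iff coprime_commute slope_def)
    then show False using assms by force
  qed
  with Some that show ?thesis by blast
qed

lemma end_invariant_SomeE:
  assumes "end_invariant A B (Some t)"
  obtains K X where "inj X" "\<And>n. X n \<in> curves" "\<And>n. 0 < fst (X n)"
    "(\<lambda>n. rslope (X n)) \<longlonglongrightarrow> t" "\<And>n. cmod (tr_curve A B (X n)) < K"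
proof -
  obtain K Xs where Xs: "inj Xs" "\<And>n. Xs n \<in> curves" "pl_tendsto (\<lambda>n. slope (Xs n)) (Some t)"
      "\<And>n. cmod (tr_curve A B (Xs n)) < K"
    using assms unfolding end_invariant_def by blast
  obtain N where N: "\<And>n. N \<le> n \<Longrightarrow> 0 < fst (Xs n)"
    using pl_tendsto_SomeD(1)[OF Xs(2,3)] unfolding eventually_sequentially by blast
  show ?thesis
  proof (rule that[of "\<lambda>n. Xs (n + N)"])
    show "inj (\<lambda>n. Xs (n + N))" unfolding inj_def using injD[OF Xs(1)] by fastforce
    show "(\<lambda>n. rslope (Xs (n + N))) \<longlonglongrightarrow> t"
      using pl_tendsto_SomeD(2)[OF Xs(2,3)] by (rule LIMSEQ_ignore_initial_segment)
  qed (use Xs N in auto)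
qed

lemma inj_seq_tendsto_of_approx:
  fixes g :: "'a \<Rightarrow> real"
  assumes approx: "\<And>\<epsilon>. 0 < \<epsilon> \<Longrightarrow> \<exists>s\<in>S. \<bar>g s - t\<bar> < \<epsilon>" and ne: "\<And>s. s \<in> S \<Longrightarrow> g s \<noteq> t"
  obtains Z where "inj Z" "\<And>n. Z n \<in> S" "(\<lambda>n. g (Z n)) \<longlonglongrightarrow> t"
proof -
  let ?P = "\<lambda>n s. s \<in> S \<and> \<bar>g s - t\<bar> < 1 / real (Suc n)"
  have "\<exists>Z. \<forall>n. ?P n (Z n) \<and> \<bar>g (Z (Suc n)) - t\<bar> < \<bar>g (Z n) - t\<bar>"
  proof (rule dependent_nat_choice)
    show "\<exists>s. ?P 0 s" using approx[of 1] by auto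
    fix s n assume "?P n s"
    then have "0 < min (1 / real (Suc (Suc n))) \<bar>g s - t\<bar>" using ne by auto
    then obtain s' where "s' \<in> S" "\<bar>g s' - t\<bar> < min (1 / real (Suc (Suc n))) \<bar>g s - t\<bar>"
      using approx by blast
    then show "\<exists>s'. ?P (Suc n) s' \<and> \<bar>g s' - t\<bar> < \<bar>g s - t\<bar>" by auto
  qed
  then obtain Z where Z: "\<And>n. Z n \<in> S" "\<And>n. \<bar>g (Z n) - t\<bar> < 1 / real (Suc n)"
    and dec: "\<And>n. \<bar>g (Z (Suc n)) - t\<bar> < \<bar>g (Z n) - t\<bar>" by blast
  have "strict_mono ((\<lambda>s. - \<bar>g s - t\<bar>) \<circ> Z)" using dec by (simp add: strict_mono_Suc_iff)
  then have "inj Z" by (rule inj_on_imageI2[OF strict_mono_imp_inj_on])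
  moreover have "(\<lambda>n. g (Z n)) \<longlonglongrightarrow> t"
  proof (rule LIM_zero_cancel, rule Lim_null_comparison)
    show "\<forall>\<^sub>F n in sequentially. norm (g (Z n) - t) \<le> 1 / real (Suc n)"
      using Z(2) less_imp_le by (auto intro!: always_eventually)
    show "(\<lambda>n. 1 / real (Suc n)) \<longlonglongrightarrow> 0" by (rule LIMSEQ_Suc[OF lim_1_over_n])
  qed
  ultimately show ?thesis using that Z(1) by blast
qed

theorem proposition5p1:
  fixes \<kappa> :: complex and A B :: "complex^2^2" and lam :: PL
  assumes "\<kappa> \<noteq> 2"
    and "in_X_kappa \<kappa> A B"
    and "end_invariant A B lam"
    and "lam \<notin> slope ` curves"
  shows "\<exists>Z :: nat \<Rightarrow> int \<times> int. inj Z \<and> (\<forall>n. Z n \<in> curves) \<and>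
           pl_tendsto (\<lambda>n. slope (Z n)) lam \<and> (\<forall>n. cmod (tr_curve A B (Z n)) \<le> 2)"
proof -
  obtain t where lam: "lam = Some t" and t: "t \<notin> \<rat>"
    using not_slope_curve_irrational[OF assms(4)] .
  obtain K X where X: "inj X" "\<And>n. X n \<in> curves" "\<And>n. 0 < fst (X n)"
      "(\<lambda>n. rslope (X n)) \<longlonglongrightarrow> t" "\<And>n. cmod (tr_curve A B (X n)) < K"
    using end_invariant_SomeE assms(3) unfolding lam by metis
  let ?S = "{w \<in> curves. 0 < fst w \<and> cmod (tr_curve A B w) \<le> 2}"
  have "\<exists>w\<in>?S. \<bar>rslope w - t\<bar> < \<epsilon>" if \<epsilon>: "0 < \<epsilon>" for \<epsilon>
  proof -
    obtain w where "w \<in> curves" "0 < fst w" "\<bar>rslope w - t\<bar> < \<epsilon>" "cmod (tr_curve A B w) \<le> 2"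
      using curve_small_trace_near_irrational[OF assms(1,2) t X \<epsilon>] by blast
    then show ?thesis by blast
  qed
  moreover have "rslope w \<noteq> t" for w using t by (auto simp: rslope_def)
  ultimately obtain Z where Z: "inj Z" "\<And>n. Z n \<in> ?S" "(\<lambda>n. rslope (Z n)) \<longlonglongrightarrow> t"
    by (rule inj_seq_tendsto_of_approx[where g = rslope]) auto
  moreover have "fst (Z n) \<noteq> 0" for n using Z(2)[of n] by simp
  ultimately have "pl_tendsto (\<lambda>n. slope (Z n)) lam" unfolding lam by (intro pl_tendsto_SomeI)
  with Z show ?thesis by auto
qed

end
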